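(* Let $k$ be an algebraically closed field, let $1\le s\le t$ be integers, $R=k[x,y]/(x^s,y^t)$ with its standard grading, and $\theta$ the image of $x+y$ in $R$. Let $\zeta,\eta$ be nonzero homogeneous elements of $R$. If $\sigma(k[\theta]\zeta)\neq\sigma(k[\theta]\eta)$, then $k[\theta]\zeta\cap k[\theta]\eta=\{0\}$; hence $k[\theta]\zeta+k[\theta]\eta=k[\theta]\zeta\oplus k[\theta]\eta$.
   Context: $R=\bigoplus_i R_i$ where $R_i$ is spanned by the images of monomials of degree $i$. For a nonzero homogeneous element $\zeta\in R_m$, the socle degree $\sigma(k[\theta]\zeta)$ of the cyclic $k[\theta]$-module $k[\theta]\zeta$ is the integer $d$ such that the socle of $k[\theta]\zeta$ as a $k[\theta]$-module is contained in $R_d$; equivalently $d=m+e$ where $e$ is the largest integer with $\theta^e\zeta\neq0$. *)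

theory Defs
  imports "HOL-Computational_Algebra.Polynomial"
begin

text \<open>Concrete model of R = k[x,y]/(x^s,y^t): an element is its coefficient
  function (i,j) \<mapsto> coefficient of x^i y^j, vanishing unless i<s and j<t.
  The monomials x^i y^j with i<s, j<t form a k-basis of R.\<close>

type_synonym 'k qelem = "nat \<Rightarrow> nat \<Rightarrow> 'k"

definition Rset :: "nat \<Rightarrow> nat \<Rightarrow> ('k::zero) qelem set" where
  "Rset s t = {f. \<forall>i j. (s \<le> i \<or> t \<le> j) \<longrightarrow> f i j = 0}"

definition rzero :: "('k::zero) qelem" where
  "rzero = (\<lambda>i j. 0)"

definition radd :: "('k::plus) qelem \<Rightarrow> 'k qelem \<Rightarrow> 'k qelem" where
  "radd f g = (\<lambda>i j. f i j + g i j)"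

definition rscale :: "'k::times \<Rightarrow> 'k qelem \<Rightarrow> 'k qelem" where
  "rscale c f = (\<lambda>i j. c * f i j)"

text \<open>Multiplication in R (product in k[x,y] followed by truncation).\<close>
definition rmult :: "nat \<Rightarrow> nat \<Rightarrow> ('k::comm_ring_1) qelem \<Rightarrow> 'k qelem \<Rightarrow> 'k qelem" where
  "rmult s t f g = (\<lambda>i j. if i < s \<and> j < t
      then (\<Sum>a\<le>i. \<Sum>b\<le>j. f a b * g (i - a) (j - b)) else 0)"

definition rone :: "nat \<Rightarrow> nat \<Rightarrow> ('k::comm_ring_1) qelem" where
  "rone s t = (\<lambda>i j. if i = 0 \<and> j = 0 \<and> 0 < s \<and> 0 < t then 1 else 0)"

definition theta :: "nat \<Rightarrow> nat \<Rightarrow> ('k::comm_ring_1) qelem" where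
  "theta s t = (\<lambda>i j. (if i = 1 \<and> j = 0 \<and> 1 < s \<and> 0 < t then 1 else 0)
                      + (if i = 0 \<and> j = 1 \<and> 0 < s \<and> 1 < t then 1 else 0))"

definition theta_pow :: "nat \<Rightarrow> nat \<Rightarrow> nat \<Rightarrow> ('k::comm_ring_1) qelem" where
  "theta_pow s t e = ((rmult s t (theta s t)) ^^ e) (rone s t)"

definition homog :: "('k::zero) qelem \<Rightarrow> nat \<Rightarrow> bool" where
  "homog f m \<longleftrightarrow> (\<forall>i j. f i j \<noteq> 0 \<longrightarrow> i + j = m)"

definition cyc :: "nat \<Rightarrow> nat \<Rightarrow> ('k::comm_ring_1) qelem \<Rightarrow> 'k qelem set" where
  "cyc s t z = {f. \<exists>(c :: nat \<Rightarrow> 'k) N.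
      f = (\<lambda>i j. \<Sum>e<N. c e * rmult s t (theta_pow s t e) z i j)}"

text \<open>Socle of the k[theta]-module M \<subseteq> R: elements annihilated by theta
  (i.e. by the graded maximal ideal of k[theta]).\<close>
definition socle :: "nat \<Rightarrow> nat \<Rightarrow> ('k::comm_ring_1) qelem set \<Rightarrow> 'k qelem set" where
  "socle s t M = {v \<in> M. rmult s t (theta s t) v = rzero}"

definition socle_degree :: "nat \<Rightarrow> nat \<Rightarrow> ('k::comm_ring_1) qelem \<Rightarrow> nat" where
  "socle_degree s t z = (THE d. socle s t (cyc s t z) \<subseteq> {v. homog v d})"

end

theory Submission
  imports Defs "HOL-Computational_Algebra.Formal_Power_Series"
begin

text \<open>Let \<zeta> be nonzero and homogeneous of degree m. The elements \<theta>^e \<zeta> are homogeneous of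
  degree m + e, so the nonzero ones are linearly independent. If E is the largest exponent with
  \<theta>^E \<zeta> \<noteq> 0, an element \<Sum> c_e \<theta>^e \<zeta> killed by \<theta> must have c_e = 0 for e < E; hence the socle of
  k[\<theta>]\<zeta> is spanned by \<theta>^E \<zeta> and lies in degree m + E. Since \<theta> is nilpotent on k[\<theta>]\<zeta>, a nonzero
  w in k[\<theta>]\<zeta> \<inter> k[\<theta>]\<eta> has a last nonzero iterate \<theta>^r w, which lies in both socles and is
  therefore homogeneous of both socle degrees. The direct sum statement follows because
  both modules are closed under negation.\<close>

abbreviation fps2_nth :: "'a::zero fps fps \<Rightarrow> nat \<Rightarrow> nat \<Rightarrow> 'a" where
  "fps2_nth A i j \<equiv> fps_nth (fps_nth A i) j"

lemma fps2_nth_mult: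
  "fps2_nth ((A :: 'a::comm_ring_1 fps fps) * B) i j
     = (\<Sum>a\<le>i. \<Sum>b\<le>j. fps2_nth A a b * fps2_nth B (i - a) (j - b))"
  by (simp add: fps_mult_nth fps_sum_nth atLeast0AtMost)

lemma fps2_nth_mult_cong:
  assumes "\<And>a b. a \<le> i \<Longrightarrow> b \<le> j \<Longrightarrow> fps2_nth A a b = fps2_nth A' a b"
  shows "fps2_nth ((A :: 'a::comm_ring_1 fps fps) * B) i j = fps2_nth (A' * B) i j"
  unfolding fps2_nth_mult using assms by (intro sum.cong refl) auto

definition bivariate_fps :: "('k::zero) qelem \<Rightarrow> 'k fps fps" where
  "bivariate_fps f = Abs_fps (\<lambda>i. Abs_fps (f i))"

lemma bivariate_fps_nth [simp]: "fps2_nth (bivariate_fps f) i j = f i j"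
  by (simp add: bivariate_fps_def)

lemma rmult_eq_truncated_fps_mult:
  "rmult s t f g i j
     = (if i < s \<and> j < t then fps2_nth (bivariate_fps f * bivariate_fps g) i j else 0)"
  by (simp add: rmult_def fps2_nth_mult)

text \<open>Truncation commutes with multiplication in the degrees that survive it, so
  associativity is inherited from the power series ring k[[x]][[y]].\<close>
lemma rmult_assoc: "rmult s t (rmult s t f g) h = rmult s t f (rmult s t g h)"
proof (intro ext)
  fix i j
  let ?F = "bivariate_fps f" and ?G = "bivariate_fps g" and ?H = "bivariate_fps h"
  show "rmult s t (rmult s t f g) h i j = rmult s t f (rmult s t g h) i j"
  proof (cases "i < s \<and> j < t")
    case True
    have "fps2_nth (bivariate_fps (rmult s t f g) * ?H) i j = fps2_nth (?F * ?G * ?H) i j"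
      by (rule fps2_nth_mult_cong) (use True in \<open>auto simp: rmult_eq_truncated_fps_mult\<close>)
    moreover have "fps2_nth (bivariate_fps (rmult s t g h) * ?F) i j = fps2_nth (?G * ?H * ?F) i j"
      by (rule fps2_nth_mult_cong) (use True in \<open>auto simp: rmult_eq_truncated_fps_mult\<close>)
    ultimately show ?thesis
      using True by (simp add: rmult_eq_truncated_fps_mult mult.commute mult.left_commute)
  qed (auto simp: rmult_def)
qed

lemma rmult_sum_right:
  "rmult s t f (\<lambda>i j. \<Sum>e\<in>A. c e * F e i j) = (\<lambda>i j. \<Sum>e\<in>A. c e * rmult s t f (F e) i j)"
proof (intro ext)
  fix i j
  have "(\<Sum>a\<le>i. \<Sum>b\<le>j. f a b * (\<Sum>e\<in>A. c e * F e (i - a) (j - b)))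
      = (\<Sum>e\<in>A. c e * (\<Sum>a\<le>i. \<Sum>b\<le>j. f a b * F e (i - a) (j - b)))"
    by (simp add: sum_distrib_left sum_distrib_right mult.left_commute sum.swap[where A = A])
  then show "rmult s t f (\<lambda>i j. \<Sum>e\<in>A. c e * F e i j) i j
      = (\<Sum>e\<in>A. c e * rmult s t f (F e) i j)"
    by (auto simp: rmult_def)
qed

lemma rmult_rzero_right [simp]: "rmult s t f rzero = rzero"
  by (simp add: rmult_def rzero_def fun_eq_iff)

lemma rmult_in_Rset: "rmult s t f g \<in> Rset s t"
  by (simp add: Rset_def rmult_def)

lemma rmult_rone_left:
  assumes "z \<in> Rset s t"
  shows "rmult s t (rone s t) z = z"
proof (intro ext)
  fix i j
  show "rmult s t (rone s t) z i j = z i j"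
  proof (cases "i < s \<and> j < t")
    case True
    have "(\<Sum>b\<le>j. rone s t a b * z (i - a) (j - b)) = (if a = 0 then z i j else 0)" for a
      using True by (simp add: rone_def if_distrib[where f = "\<lambda>x. x * _"] sum.delta cong: if_cong)
    then show ?thesis
      using True by (simp add: rmult_def)
  qed (use assms in \<open>auto simp: rmult_def Rset_def\<close>)
qed

lemma theta_pow_0 [simp]: "theta_pow s t 0 = rone s t"
  by (simp add: theta_pow_def)

lemma theta_pow_Suc: "theta_pow s t (Suc e) = rmult s t (theta s t) (theta_pow s t e)"
  by (simp add: theta_pow_def)

lemma homog_rmult:
  assumes "homog f p" and "homog g q"
  shows "homog (rmult s t f g) (p + q)"
  unfolding homog_def
proof (intro allI impI)
  fix i j
  assume "rmult s t f g i j \<noteq> 0"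
  then have "(\<Sum>a\<le>i. \<Sum>b\<le>j. f a b * g (i - a) (j - b)) \<noteq> 0"
    by (simp add: rmult_def split: if_splits)
  then obtain a where a: "a \<le> i" "(\<Sum>b\<le>j. f a b * g (i - a) (j - b)) \<noteq> 0"
    by (rule sum.not_neutral_contains_not_neutral) simp
  from a(2) obtain b where b: "b \<le> j" "f a b * g (i - a) (j - b) \<noteq> 0"
    by (rule sum.not_neutral_contains_not_neutral) simp
  from b(2) have "f a b \<noteq> 0" and "g (i - a) (j - b) \<noteq> 0"
    by auto
  with assms have "a + b = p" and "(i - a) + (j - b) = q"
    unfolding homog_def by blast+
  with a(1) b(1) show "i + j = p + q" by simp
qed

lemma homog_theta: "homog (theta s t) 1"
  by (simp add: homog_def theta_def)

lemma homog_theta_pow: "homog (theta_pow s t e) e"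
proof (induction e)
  case 0
  show ?case by (simp add: homog_def rone_def)
next
  case (Suc e)
  show ?case
    using homog_rmult[OF homog_theta Suc] by (simp add: theta_pow_Suc)
qed

text \<open>The top degree of R is (s - 1) + (t - 1).\<close>
lemma homog_in_Rset_eq_rzero:
  assumes "f \<in> Rset s t" and "homog f n" and "s + t \<le> n + 1"
  shows "f = rzero"
proof (intro ext)
  fix i j
  have "i < s \<and> j < t \<and> i + j = n" if "f i j \<noteq> 0"
    using assms(1,2) that by (auto simp: Rset_def homog_def) (meson not_le)+
  with assms(3) show "f i j = rzero i j"
    by (fastforce simp: rzero_def)
qed

lemma homog_degree_unique:
  assumes "homog v d" and "homog v d'" and "v \<noteq> rzero"
  shows "d = d'"
proof -
  obtain i j where "v i j \<noteq> 0"
    using assms(3) by (auto simp: rzero_def fun_eq_iff)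
  with assms(1,2) show ?thesis by (auto simp: homog_def)
qed

lemma homog_comb_nth:
  fixes F :: "nat \<Rightarrow> ('k::semiring_0) qelem"
  assumes "\<And>e. homog (F e) (m + e)" and "i + j = m + e\<^sub>0"
  shows "(\<Sum>e<N. c e * F e i j) = (if e\<^sub>0 < N then c e\<^sub>0 * F e\<^sub>0 i j else 0)"
proof -
  have "F e i j = 0" if "e \<noteq> e\<^sub>0" for e
    using assms that unfolding homog_def by (metis add_left_cancel)
  then have "(\<Sum>e<N. c e * F e i j) = (\<Sum>e<N. if e = e\<^sub>0 then c e\<^sub>0 * F e\<^sub>0 i j else 0)"
    by (intro sum.cong) auto
  then show ?thesis by simp
qed

lemma homog_comb_coeff_eq_0:
  fixes F :: "nat \<Rightarrow> ('k::idom) qelem"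
  assumes "\<And>e. homog (F e) (m + e)" and "(\<lambda>i j. \<Sum>e<N. c e * F e i j) = rzero"
    and "F e\<^sub>0 \<noteq> rzero" and "e\<^sub>0 < N"
  shows "c e\<^sub>0 = 0"
proof -
  obtain i j where nz: "F e\<^sub>0 i j \<noteq> 0"
    using assms(3) by (auto simp: rzero_def fun_eq_iff)
  with assms(1) have "i + j = m + e\<^sub>0" by (auto simp: homog_def)
  from homog_comb_nth[OF assms(1) this, where N = N and c = c] assms(2,4)
  have "c e\<^sub>0 * F e\<^sub>0 i j = 0" by (simp add: rzero_def fun_eq_iff)
  with nz show ?thesis by simp
qed

lemma funpow_last_not:
  assumes "\<not> P x" and "P ((f ^^ n) x)"
  shows "\<exists>r. \<not> P ((f ^^ r) x) \<and> P (f ((f ^^ r) x))"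
  using assms(2)
proof (induction n)
  case 0
  with assms(1) show ?case by simp
next
  case (Suc n)
  then show ?case by (cases "P ((f ^^ n) x)") auto
qed

locale homog_generator =
  fixes s t :: nat and z :: "('k::idom) qelem" and m :: nat
  assumes z_in_Rset: "z \<in> Rset s t" and z_nonzero: "z \<noteq> rzero" and homog_z: "homog z m"
begin

definition theta_z :: "nat \<Rightarrow> 'k qelem" where
  "theta_z e = rmult s t (theta_pow s t e) z"

lemma theta_z_0: "theta_z 0 = z"
  by (simp add: theta_z_def rmult_rone_left[OF z_in_Rset])

lemma theta_z_Suc: "theta_z (Suc e) = rmult s t (theta s t) (theta_z e)"
  by (simp add: theta_z_def theta_pow_Suc rmult_assoc)

lemma homog_theta_z: "homog (theta_z e) (m + e)"
  unfolding theta_z_def using homog_rmult[OF homog_theta_pow homog_z] by (simp add: add.commute)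

lemma theta_z_eq_rzero_if_large: "s + t \<le> e \<Longrightarrow> theta_z e = rzero"
  by (rule homog_in_Rset_eq_rzero[where s = s and t = t, OF _ homog_theta_z])
    (auto simp: theta_z_def rmult_in_Rset)

lemma theta_z_eq_rzero_mono:
  assumes "theta_z e = rzero" and "e \<le> e'"
  shows "theta_z e' = rzero"
  using assms(2)
proof (induction e' rule: dec_induct)
  case base
  show ?case by (fact assms(1))
next
  case (step e')
  then show ?case by (simp add: theta_z_Suc)
qed

definition emax :: nat where
  "emax = Max {e. theta_z e \<noteq> rzero}"

lemma finite_theta_z_nonzero: "finite {e. theta_z e \<noteq> rzero}"
  by (rule finite_subset[of _ "{..<s + t}"]) (auto intro: ccontr theta_z_eq_rzero_if_large)

lemma theta_z_emax: "theta_z emax \<noteq> rzero"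
proof -
  have "0 \<in> {e. theta_z e \<noteq> rzero}"
    using theta_z_0 z_nonzero by simp
  then have "emax \<in> {e. theta_z e \<noteq> rzero}"
    unfolding emax_def using finite_theta_z_nonzero by (intro Max_in) auto
  then show ?thesis by simp
qed

lemma theta_z_nonzero_iff: "theta_z e \<noteq> rzero \<longleftrightarrow> e \<le> emax"
proof
  assume "theta_z e \<noteq> rzero"
  then show "e \<le> emax"
    unfolding emax_def using finite_theta_z_nonzero by (intro Max_ge) auto
next
  assume "e \<le> emax"
  then show "theta_z e \<noteq> rzero"
    using theta_z_emax theta_z_eq_rzero_mono by blast
qed

lemma cyc_iff: "w \<in> cyc s t z \<longleftrightarrow> (\<exists>c N. w = (\<lambda>i j. \<Sum>e<N. c e * theta_z e i j))"
  by (simp add: cyc_def theta_z_def)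

lemma funpow_theta_comb:
  "(rmult s t (theta s t) ^^ r) (\<lambda>i j. \<Sum>e<N. c e * theta_z e i j)
     = (\<lambda>i j. \<Sum>e<N. c e * theta_z (e + r) i j)"
  by (induction r) (simp_all add: rmult_sum_right theta_z_Suc)

lemma comb_in_cyc: "(\<lambda>i j. \<Sum>e<N. c e * theta_z e i j) \<in> cyc s t z"
  unfolding cyc_def theta_z_def by blast

lemma rzero_in_cyc: "rzero \<in> cyc s t z"
  using comb_in_cyc[where N = 0] by (simp add: rzero_def)

lemma cyc_uminus:
  assumes "w \<in> cyc s t z"
  shows "(\<lambda>i j. - w i j) \<in> cyc s t z"
proof -
  obtain c N where w: "w = (\<lambda>i j. \<Sum>e<N. c e * theta_z e i j)"
    using assms cyc_iff by blast
  have "(\<lambda>i j. - w i j) = (\<lambda>i j. \<Sum>e<N. (- c e) * theta_z e i j)"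
    by (simp add: w sum_negf)
  then show ?thesis
    by (simp only: comb_in_cyc)
qed

lemma cyc_theta:
  assumes "w \<in> cyc s t z"
  shows "rmult s t (theta s t) w \<in> cyc s t z"
proof -
  obtain c N where w: "w = (\<lambda>i j. \<Sum>e<N. c e * theta_z e i j)"
    using assms cyc_iff by blast
  define c' where "c' e = (case e of 0 \<Rightarrow> 0 | Suc e' \<Rightarrow> c e')" for e
  have "rmult s t (theta s t) w = (\<lambda>i j. \<Sum>e<N. c e * theta_z (Suc e) i j)"
    using funpow_theta_comb[of 1] by (simp add: w)
  also have "\<dots> = (\<lambda>i j. \<Sum>e<Suc N. c' e * theta_z e i j)"
    by (simp only: sum.lessThan_Suc_shift) (simp add: c'_def)
  finally show ?thesis
    by (simp only: comb_in_cyc)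
qed

lemma cyc_funpow_theta: "w \<in> cyc s t z \<Longrightarrow> (rmult s t (theta s t) ^^ r) w \<in> cyc s t z"
  by (induction r) (simp_all add: cyc_theta)

lemma cyc_funpow_theta_eq_rzero:
  assumes "w \<in> cyc s t z"
  shows "(rmult s t (theta s t) ^^ Suc emax) w = rzero"
proof -
  obtain c N where w: "w = (\<lambda>i j. \<Sum>e<N. c e * theta_z e i j)"
    using assms cyc_iff by blast
  have "theta_z (e + Suc emax) = rzero" for e
    using theta_z_nonzero_iff[of "e + Suc emax"] by simp
  then show ?thesis
    unfolding w funpow_theta_comb by (simp add: rzero_def)
qed

lemma socle_elem_homog:
  assumes "w \<in> cyc s t z" and "rmult s t (theta s t) w = rzero"
  shows "homog w (m + emax)"
proof -
  obtain c N where w: "w = (\<lambda>i j. \<Sum>e<N. c e * theta_z e i j)"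
    using assms(1) cyc_iff by blast
  have theta_w: "(\<lambda>i j. \<Sum>e<N. c e * theta_z (Suc e) i j) = rzero"
    using assms(2) funpow_theta_comb[of 1] by (simp add: w)
  have c_below: "c e = 0" if "e < N" and "e < emax" for e
    by (rule homog_comb_coeff_eq_0[where F = "\<lambda>e. theta_z (Suc e)" and m = "Suc m", OF _ theta_w])
      (use homog_theta_z[of "Suc _"] theta_z_nonzero_iff[of "Suc e"] that in auto)
  show ?thesis
    unfolding homog_def
  proof (intro allI impI)
    fix i j
    assume "w i j \<noteq> 0"
    then have "(\<Sum>e<N. c e * theta_z e i j) \<noteq> 0"
      by (simp add: w)
    then obtain e where "e < N" and "c e * theta_z e i j \<noteq> 0"
      by (rule sum.not_neutral_contains_not_neutral) simp
    moreover from this have "e \<le> emax" and "i + j = m + e"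
      using theta_z_nonzero_iff homog_theta_z[of e] by (auto simp: rzero_def fun_eq_iff homog_def)
    ultimately show "i + j = m + emax"
      using c_below by (metis le_neq_implies_less mult_eq_0_iff)
  qed
qed

lemma theta_z_emax_in_socle: "theta_z emax \<in> socle s t (cyc s t z)"
proof -
  have "theta_z emax = (\<lambda>i j. \<Sum>e<Suc emax. (if e = emax then 1 else 0) * theta_z e i j)"
    by (simp add: if_distrib[where f = "\<lambda>x. x * _"] cong: if_cong)
  then have "theta_z emax \<in> cyc s t z"
    by (simp only: comb_in_cyc)
  then show ?thesis
    using theta_z_nonzero_iff[of "Suc emax"] by (simp add: socle_def theta_z_Suc)
qed

lemma socle_degree_eq: "socle_degree s t z = m + emax"
  unfolding socle_degree_def
proof (rule the_equality)
  show "socle s t (cyc s t z) \<subseteq> {v. homog v (m + emax)}"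
    using socle_elem_homog by (auto simp: socle_def)
next
  fix d
  assume "socle s t (cyc s t z) \<subseteq> {v. homog v d}"
  then have "homog (theta_z emax) d"
    using theta_z_emax_in_socle by auto
  then show "d = m + emax"
    using homog_degree_unique homog_theta_z theta_z_emax by blast
qed

lemma socle_cyc_homog: "v \<in> socle s t (cyc s t z) \<Longrightarrow> homog v (socle_degree s t z)"
  using socle_elem_homog by (simp add: socle_def socle_degree_eq)

end

lemma cyc_inter_eq_rzero:
  assumes gen\<^sub>1: "homog_generator s t \<zeta> m\<^sub>1" and gen\<^sub>2: "homog_generator s t \<eta> m\<^sub>2"
    and "socle_degree s t \<zeta> \<noteq> socle_degree s t \<eta>"
    and w: "w \<in> cyc s t \<zeta>" "w \<in> cyc s t \<eta>"
  shows "w = rzero"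
proof (rule ccontr)
  let ?\<theta> = "rmult s t (theta s t)"
  assume "w \<noteq> rzero"
  moreover have "(?\<theta> ^^ Suc (homog_generator.emax s t \<zeta>)) w = rzero"
    using homog_generator.cyc_funpow_theta_eq_rzero[OF gen\<^sub>1 w(1)] .
  ultimately obtain r where nz: "(?\<theta> ^^ r) w \<noteq> rzero" and "?\<theta> ((?\<theta> ^^ r) w) = rzero"
    using funpow_last_not[of "\<lambda>v. v = rzero"] by blast
  then have "(?\<theta> ^^ r) w \<in> socle s t (cyc s t \<zeta>)" "(?\<theta> ^^ r) w \<in> socle s t (cyc s t \<eta>)"
    using homog_generator.cyc_funpow_theta[OF gen\<^sub>1 w(1)]
      homog_generator.cyc_funpow_theta[OF gen\<^sub>2 w(2)] by (simp_all add: socle_def)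
  then have "socle_degree s t \<zeta> = socle_degree s t \<eta>"
    using homog_degree_unique[OF _ _ nz] homog_generator.socle_cyc_homog[OF gen\<^sub>1]
      homog_generator.socle_cyc_homog[OF gen\<^sub>2] by blast
  with assms(3) show False ..
qed

theorem lemma2p13:
  fixes s t :: nat and zeta eta :: "('k::alg_closed_field) qelem"
  assumes "1 \<le> s" and "s \<le> t"
    and "zeta \<in> Rset s t" and "zeta \<noteq> rzero" and "\<exists>m. homog zeta m"
    and "eta \<in> Rset s t" and "eta \<noteq> rzero" and "\<exists>m. homog eta m"
    and "socle_degree s t zeta \<noteq> socle_degree s t eta"
  shows "cyc s t zeta \<inter> cyc s t eta = {rzero}
    \<and> (\<forall>a \<in> cyc s t zeta. \<forall>b \<in> cyc s t eta. radd a b = rzero \<longrightarrow> a = rzero \<and> b = rzero)"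
proof -
  obtain m\<^sub>1 m\<^sub>2 where gen\<^sub>1: "homog_generator s t zeta m\<^sub>1" and gen\<^sub>2: "homog_generator s t eta m\<^sub>2"
    using assms(3-8) by (meson homog_generator.intro)
  note inter_trivial = cyc_inter_eq_rzero[OF gen\<^sub>1 gen\<^sub>2 assms(9)]
  have "a = rzero \<and> b = rzero"
    if a: "a \<in> cyc s t zeta" and b: "b \<in> cyc s t eta" and "radd a b = rzero" for a b
  proof -
    have "a = (\<lambda>i j. - b i j)"
      using \<open>radd a b = rzero\<close> by (auto simp: radd_def rzero_def fun_eq_iff eq_neg_iff_add_eq_0)
    then have "a = rzero"
      using inter_trivial[OF a] homog_generator.cyc_uminus[OF gen\<^sub>2 b] by simp
    with \<open>radd a b = rzero\<close> show ?thesis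
      by (simp add: radd_def rzero_def fun_eq_iff)
  qed
  then show ?thesis
    using inter_trivial homog_generator.rzero_in_cyc[OF gen\<^sub>1]
      homog_generator.rzero_in_cyc[OF gen\<^sub>2] by blast
qed

end
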